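(* Let $n\ge0$. For every $m\ge0$, in $OPol_{n+1}$: (1) $x_{n+1}^{m+n+1}=-\sum_{q=0}^n\Big(\sum_{r=0}^m(-1)^{m+n+1-q-r}h_r^{(n+1)}e^{(n+1)}_{m+n+1-q-r}\Big)x_{n+1}^q$; (2) $x_1^{m+n+1}=-\sum_{p=0}^nx_1^p\Big(\sum_{s=0}^m(-1)^{m+n+1-p-s}e^{(n+1)}_{m+n+1-p-s}h^{(n+1)}_s\Big)$.
   Context: $\Bbbk$ is a field of characteristic $\neq2$. $OPol_N$ is the graded superalgebra generated by odd degree-2 elements $x_1,\dots,x_N$ with $x_jx_i=-x_ix_j$ ($i\ne j$). $e_r^{(N)}:=\sum_{1\le i_1<\cdots<i_r\le N}x_{i_1}\cdots x_{i_r}$ (zero for $r>N$) and $h_r^{(N)}:=\sum_{N\ge i_r\ge\cdots\ge i_1\ge1}x_{i_r}\cdots x_{i_1}$, with $e^{(N)}_0=h^{(N)}_0=1$. *)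

theory Defs
  imports Main "HOL-Library.Function_Algebras"
begin

text \<open>Concrete model of the odd polynomial superalgebra OPol_N over a field:
  an element is a coefficient function on exponent vectors (nat => nat); the
  (ordered) monomial with exponent vector a stands for x_1^(a 1) ... x_N^(a N).
  These ordered monomials form a basis of OPol_N, and the product is
  x^a * x^b = (-1)^(sum_{j<i} a_i b_j) x^(a+b), which is exactly the rule forced by
  x_j x_i = - x_i x_j for i ~= j (no relation on squares).\<close>

type_synonym 'a opol = "(nat \<Rightarrow> nat) \<Rightarrow> 'a"

definition mon_ok :: "nat \<Rightarrow> (nat \<Rightarrow> nat) \<Rightarrow> bool" where
  "mon_ok N a \<longleftrightarrow> (\<forall>i. a i \<noteq> 0 \<longrightarrow> i \<in> {1..N})"

definition op_sign :: "nat \<Rightarrow> (nat \<Rightarrow> nat) \<Rightarrow> (nat \<Rightarrow> nat) \<Rightarrow> 'a::comm_ring_1" where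
  "op_sign N a b = (-1) ^ (\<Sum>i\<in>{1..N}. \<Sum>j\<in>{1..<i}. a i * b j)"

definition opmul :: "nat \<Rightarrow> 'a::comm_ring_1 opol \<Rightarrow> 'a opol \<Rightarrow> 'a opol" where
  "opmul N f g = (\<lambda>c. if mon_ok N c then
      (\<Sum>a\<in>{a. mon_ok N a \<and> (\<forall>i. a i \<le> c i)}.
          op_sign N a (\<lambda>i. c i - a i) * f a * g (\<lambda>i. c i - a i))
    else 0)"

definition opone :: "'a::comm_ring_1 opol" where
  "opone = (\<lambda>c. if c = (\<lambda>_. 0) then 1 else 0)"

definition opvar :: "nat \<Rightarrow> 'a::comm_ring_1 opol" where
  "opvar i = (\<lambda>c. if c = (\<lambda>j. if j = i then 1 else 0) then 1 else 0)"

definition opscale :: "'a::comm_ring_1 \<Rightarrow> 'a opol \<Rightarrow> 'a opol" where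
  "opscale k f = (\<lambda>c. k * f c)"

definition oppow :: "nat \<Rightarrow> 'a::comm_ring_1 opol \<Rightarrow> nat \<Rightarrow> 'a opol" where
  "oppow N f k = (opmul N f ^^ k) opone"

definition opprod :: "nat \<Rightarrow> 'a::comm_ring_1 opol list \<Rightarrow> 'a opol" where
  "opprod N fs = foldr (opmul N) fs opone"

definition op_e :: "nat \<Rightarrow> nat \<Rightarrow> 'a::comm_ring_1 opol" where
  "op_e N r = (\<Sum>S\<in>{S. S \<subseteq> {1..N} \<and> card S = r}.
      opprod N (map opvar (sorted_list_of_set S)))"

definition op_h :: "nat \<Rightarrow> nat \<Rightarrow> 'a::comm_ring_1 opol" where
  "op_h N r = (\<Sum>xs\<in>{xs. length xs = r \<and> sorted xs \<and> set xs \<subseteq> {1..N}}.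
      opprod N (map opvar (rev xs)))"

end

theory Submission
  imports Defs
begin

text \<open>
  Write E(t) = sum_r (-1)^r e_r t^r and H(t) = sum_r h_r t^r for the series of a set of
  variables. Splitting off the smallest variable, e and h satisfy recursions under which
  H(t) E(t) is unchanged, so H(t) E(t) = 1. Splitting off the largest variable x_N instead gives
  E(t) * sum_q x_N^q t^q = E'(t), the series of the variables other than x_N, which has
  degree less than N; its coefficient of t^N expresses x_N^N through lower powers, and
  multiplying by x_N and reducing with H(t) E(t) = 1 proves (1) by induction on m. Identity (2)
  is the image of (1) under the anti-automorphism sending x_i to x_(N+1-i), which fixes every
  e_r and h_r.
\<close>

lemma sum_apply: "(\<Sum>i\<in>I. F i) c = (\<Sum>i\<in>I. F i c)"
  by (induct I rule: infinite_finite_induct) auto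

section \<open>The product of odd polynomials\<close>

text \<open>The unit laws hold only for coefficient functions vanishing off the monomials in the
  first N variables.\<close>

definition in_opol :: "nat \<Rightarrow> 'a::comm_ring_1 opol \<Rightarrow> bool" where
  "in_opol N f \<longleftrightarrow> (\<forall>c. \<not> mon_ok N c \<longrightarrow> f c = 0)"

definition mon_below :: "nat \<Rightarrow> (nat \<Rightarrow> nat) \<Rightarrow> (nat \<Rightarrow> nat) set" where
  "mon_below N c = {a. mon_ok N a \<and> (\<forall>i. a i \<le> c i)}"

lemma finite_mon_below: "finite (mon_below N c)"
proof (rule finite_subset)
  show "mon_below N c \<subseteq> {a. \<forall>i. (i \<in> {1..N} \<longrightarrow> a i \<in> {0..(\<Sum>j\<in>{1..N}. c j)}) \<and> (i \<notin> {1..N} \<longrightarrow> a i = 0)}"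
    by (auto simp: mon_below_def mon_ok_def intro: order.trans[OF _ member_le_sum])
  show "finite \<dots>"
    by (rule finite_set_of_finite_funs) auto
qed

lemma opmul_apply:
  "opmul N f g c = (if mon_ok N c then
     (\<Sum>a\<in>mon_below N c. op_sign N a (\<lambda>i. c i - a i) * f a * g (\<lambda>i. c i - a i)) else 0)"
  by (simp add: opmul_def mon_below_def)

lemma mon_ok_mono: "mon_ok N c \<Longrightarrow> \<forall>i. a i \<le> c i \<Longrightarrow> mon_ok N a"
  unfolding mon_ok_def by (metis le_zero_eq)

lemma mem_mon_below_iff: "mon_ok N c \<Longrightarrow> a \<in> mon_below N c \<longleftrightarrow> (\<forall>i. a i \<le> c i)"
  using mon_ok_mono by (auto simp: mon_below_def)

lemma mon_ok_diff: "mon_ok N c \<Longrightarrow> mon_ok N (\<lambda>i. c i - a i)"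
  by (auto simp: mon_ok_def)

lemma in_opol_opmul [simp]: "in_opol N (opmul N f g)"
  by (simp add: in_opol_def opmul_def)

lemma in_opol_opone [simp]: "in_opol N opone"
  by (simp add: in_opol_def opone_def mon_ok_def)

lemma in_opol_opvar [simp]: "i \<in> {1..N} \<Longrightarrow> in_opol N (opvar i)"
  by (auto simp: in_opol_def opvar_def mon_ok_def)

lemma in_opol_oppow [simp]: "in_opol N (oppow N f k)"
  by (cases k) (auto simp: oppow_def)

lemma in_opol_opprod [simp]: "in_opol N (opprod N fs)"
  by (cases fs) (auto simp: opprod_def)

lemma in_opol_sum [simp]: "(\<And>i. i \<in> I \<Longrightarrow> in_opol N (F i)) \<Longrightarrow> in_opol N (\<Sum>i\<in>I. F i)"
  by (simp add: in_opol_def sum_apply)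

lemma in_opol_diff [simp]: "in_opol N f \<Longrightarrow> in_opol N g \<Longrightarrow> in_opol N (f - g)"
  by (simp add: in_opol_def)

lemma in_opol_opscale [simp]: "in_opol N f \<Longrightarrow> in_opol N (opscale k f)"
  by (simp add: in_opol_def opscale_def)

lemma op_sign_add_left:
  "op_sign N (\<lambda>i. a i + b i) c = (op_sign N a c * op_sign N b c :: 'a::comm_ring_1)"
  by (simp add: op_sign_def algebra_simps sum.distrib power_add)

lemma op_sign_add_right:
  "op_sign N c (\<lambda>i. a i + b i) = (op_sign N c a * op_sign N c b :: 'a::comm_ring_1)"
  by (simp add: op_sign_def algebra_simps sum.distrib power_add)

lemma op_sign_zero_left [simp]: "op_sign N (\<lambda>_. 0) c = 1"
  by (simp add: op_sign_def)

lemma op_sign_zero_right [simp]: "op_sign N c (\<lambda>_. 0) = 1"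
  by (simp add: op_sign_def)

lemma op_sign_cocycle:
  assumes "\<forall>i. b i \<le> a i" and "\<forall>i. a i \<le> c i"
  shows "op_sign N a (\<lambda>i. c i - a i) * op_sign N b (\<lambda>i. a i - b i)
       = (op_sign N b (\<lambda>i. c i - b i) * op_sign N (\<lambda>i. a i - b i) (\<lambda>i. c i - a i) :: 'a::comm_ring_1)"
proof -
  have a: "a = (\<lambda>i. b i + (a i - b i))" and cb: "(\<lambda>i. c i - b i) = (\<lambda>i. (a i - b i) + (c i - a i))"
    using assms by (auto simp: fun_eq_iff)
  show ?thesis
    by (subst (1) a, subst cb) (simp add: op_sign_add_left op_sign_add_right mult_ac)
qed

lemma opmul_assoc: "opmul N (opmul N f g) h = opmul N f (opmul N g h)"
proof
  fix c :: "nat \<Rightarrow> nat"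
  show "opmul N (opmul N f g) h c = opmul N f (opmul N g h) c"
  proof (cases "mon_ok N c")
    case False
    then show ?thesis by (simp add: opmul_apply)
  next
    case c: True
    let ?d = "\<lambda>x y i. x i - y i :: nat"
    let ?S = "SIGMA a:mon_below N c. mon_below N a"
    let ?T = "SIGMA b:mon_below N c. mon_below N (?d c b)"
    let ?L = "\<lambda>a b. op_sign N a (?d c a) * op_sign N b (?d a b) * f b * g (?d a b) * h (?d c a)"
    let ?R = "\<lambda>b d. op_sign N b (?d c b) * op_sign N d (?d (?d c b) d) * f b * g d * h (?d (?d c b) d)"
    have "opmul N (opmul N f g) h c = (\<Sum>a\<in>mon_below N c. \<Sum>b\<in>mon_below N a. ?L a b)"
      by (auto simp: c opmul_apply[of N _ h] opmul_apply[of N f g] mon_below_def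
          sum_distrib_left sum_distrib_right mult_ac intro!: sum.cong)
    also have "\<dots> = (\<Sum>(a,b)\<in>?S. ?L a b)"
      by (rule sum.Sigma) (auto simp: finite_mon_below)
    also have "\<dots> = (\<Sum>(b,d)\<in>?T. ?R b d)"
    proof (rule sum.reindex_bij_witness[where i="\<lambda>(b,d). (\<lambda>i. b i + d i, b)" and j="\<lambda>(a,b). (b, ?d a b)"])
      fix p assume "p \<in> ?S"
      then obtain a b where p: "p = (a,b)" and ac: "\<forall>i. a i \<le> c i" and ba: "\<forall>i. b i \<le> a i"
        by (auto simp: mon_below_def)
      show "(case case p of (a, b) \<Rightarrow> (b, ?d a b) of (b, d) \<Rightarrow> (\<lambda>i. b i + d i, b)) = p"
        using p ba by (auto simp: fun_eq_iff)
      show "(case p of (a, b) \<Rightarrow> (b, ?d a b)) \<in> ?T"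
        using p ac ba c by (auto simp: mem_mon_below_iff mon_ok_diff intro: order.trans diff_le_mono)
      have "?d (?d c b) (?d a b) = ?d c a" using ac ba by (auto simp: fun_eq_iff)
      then show "(case case p of (a, b) \<Rightarrow> (b, ?d a b) of (b, d) \<Rightarrow> ?R b d) = (case p of (a, b) \<Rightarrow> ?L a b)"
        using p by (simp add: op_sign_cocycle[OF ba ac, symmetric] mult_ac)
    next
      fix q assume "q \<in> ?T"
      then obtain b d where q: "q = (b,d)" and bc: "\<forall>i. b i \<le> c i" and dc: "\<forall>i. d i \<le> c i - b i"
        by (auto simp: mon_below_def)
      show "(case case q of (b, d) \<Rightarrow> (\<lambda>i. b i + d i, b) of (a, b) \<Rightarrow> (b, ?d a b)) = q"
        using q by (auto simp: fun_eq_iff)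
      have bdc: "\<forall>i. b i + d i \<le> c i" using bc dc by (metis le_diff_conv2 add.commute)
      then have "mon_ok N (\<lambda>i. b i + d i)" by (rule mon_ok_mono[OF c])
      then show "(case q of (b, d) \<Rightarrow> (\<lambda>i. b i + d i, b)) \<in> ?S"
        using q c bdc by (simp add: mem_mon_below_iff)
    qed
    also have "\<dots> = (\<Sum>b\<in>mon_below N c. \<Sum>d\<in>mon_below N (?d c b). ?R b d)"
      by (rule sum.Sigma[symmetric]) (auto simp: finite_mon_below)
    also have "\<dots> = opmul N f (opmul N g h) c"
      by (auto simp: c opmul_apply[of N f] opmul_apply[of N g h] mon_ok_diff
          sum_distrib_left sum_distrib_right mult_ac intro!: sum.cong)
    finally show ?thesis .
  qed
qed

lemma opmul_add_left: "opmul N (f + g) h = opmul N f h + opmul N g h"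
  by (rule ext) (simp add: opmul_apply sum.distrib[symmetric] algebra_simps)

lemma opmul_add_right: "opmul N h (f + g) = opmul N h f + opmul N h g"
  by (rule ext) (simp add: opmul_apply sum.distrib[symmetric] algebra_simps)

lemma opmul_uminus_left: "opmul N (- f) h = - opmul N f h"
  by (rule ext) (simp add: opmul_apply sum_negf[symmetric])

lemma opmul_uminus_right: "opmul N h (- f) = - opmul N h f"
  by (rule ext) (simp add: opmul_apply sum_negf[symmetric])

lemma opmul_diff_right: "opmul N h (f - g) = opmul N h f - opmul N h g"
  using opmul_add_right[of N h f "- g"] by (simp add: opmul_uminus_right)

lemma opmul_zero_left [simp]: "opmul N 0 g = 0"
  by (rule ext) (simp add: opmul_apply)

lemma opmul_zero_right [simp]: "opmul N g 0 = 0"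
  by (rule ext) (simp add: opmul_apply)

lemma opmul_sum_left: "opmul N (\<Sum>i\<in>I. F i) h = (\<Sum>i\<in>I. opmul N (F i) h)"
  by (rule ext) (auto simp: opmul_apply sum_apply sum_distrib_left sum_distrib_right intro: sum.swap)

lemma opmul_sum_right: "opmul N h (\<Sum>i\<in>I. F i) = (\<Sum>i\<in>I. opmul N h (F i))"
  by (rule ext) (auto simp: opmul_apply sum_apply sum_distrib_left sum_distrib_right intro: sum.swap)

lemma opmul_opscale_left: "opmul N (opscale k f) h = opscale k (opmul N f h)"
  by (rule ext) (simp add: opmul_apply opscale_def sum_distrib_left mult_ac)

lemma opmul_opscale_right: "opmul N h (opscale k f) = opscale k (opmul N h f)"
  by (rule ext) (simp add: opmul_apply opscale_def sum_distrib_left mult_ac)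

lemma opmul_opone_left: "in_opol N g \<Longrightarrow> opmul N opone g = g"
proof
  fix c
  assume g: "in_opol N g"
  show "opmul N opone g c = g c"
  proof (cases "mon_ok N c")
    case False
    then show ?thesis using g by (simp add: opmul_apply in_opol_def)
  next
    case True
    have "opmul N opone g c = (\<Sum>a\<in>mon_below N c. if a = (\<lambda>_. 0) then g c else 0)"
      using True by (auto simp: opmul_apply opone_def intro!: sum.cong)
    also have "\<dots> = g c"
      using True by (simp add: finite_mon_below mem_mon_below_iff)
    finally show ?thesis .
  qed
qed

lemma opmul_opone_right: "in_opol N g \<Longrightarrow> opmul N g opone = g"
proof
  fix c
  assume g: "in_opol N g"
  show "opmul N g opone c = g c"
  proof (cases "mon_ok N c")
    case False
    then show ?thesis using g by (simp add: opmul_apply in_opol_def)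
  next
    case True
    have "(\<lambda>i. c i - a i) = (\<lambda>_. 0) \<longleftrightarrow> a = c" if "a \<in> mon_below N c" for a
      using that True by (auto simp: mem_mon_below_iff fun_eq_iff) (metis diff_is_0_eq le_antisym)
    then have "opmul N g opone c = (\<Sum>a\<in>mon_below N c. if a = c then g c else 0)"
      using True by (auto simp: opmul_apply opone_def intro!: sum.cong)
    also have "\<dots> = g c"
      using True by (simp add: finite_mon_below mem_mon_below_iff)
    finally show ?thesis .
  qed
qed

lemma opprod_Cons: "opprod N (f # fs) = opmul N f (opprod N fs)"
  by (simp add: opprod_def)

lemma opprod_Nil [simp]: "opprod N [] = opone"
  by (simp add: opprod_def)

lemma opprod_append: "opprod N (xs @ ys) = opmul N (opprod N xs) (opprod N ys)"
  using in_opol_opprod[of N ys]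
  by (induct xs) (simp_all add: opprod_def opmul_opone_left opmul_assoc)

lemma oppow_Suc: "oppow N f (Suc k) = opmul N f (oppow N f k)"
  by (simp add: oppow_def)

lemma oppow_0 [simp]: "oppow N f 0 = opone"
  by (simp add: oppow_def)

lemma oppow_add: "oppow N f (a + b) = opmul N (oppow N f a) (oppow N f b)"
  by (induct a) (simp_all add: oppow_Suc opmul_opone_left opmul_assoc)

lemma oppow_Suc': "in_opol N f \<Longrightarrow> oppow N f (Suc k) = opmul N (oppow N f k) f"
  using oppow_add[of N f k 1] by (simp add: oppow_Suc opmul_opone_right)

section \<open>The reversal anti-automorphism\<close>

text \<open>The anti-automorphism sending x_i to x_(N+1-i) also reverses the order of factors, so it maps
  the ordered monomial with exponent vector c to the one with exponent vector
  \<open>mon_mirror N c\<close>, without a sign.\<close>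

definition mon_mirror :: "nat \<Rightarrow> (nat \<Rightarrow> nat) \<Rightarrow> nat \<Rightarrow> nat" where
  "mon_mirror N c = (\<lambda>i. if i \<in> {1..N} then c (Suc N - i) else c i)"

definition op_reverse :: "nat \<Rightarrow> 'a::comm_ring_1 opol \<Rightarrow> 'a opol" where
  "op_reverse N f = (\<lambda>c. f (mon_mirror N c))"

lemma mon_mirror_mon_mirror [simp]: "mon_mirror N (mon_mirror N c) = c"
  by (auto simp: mon_mirror_def fun_eq_iff)

lemma mon_ok_mon_mirror [simp]: "mon_ok N (mon_mirror N c) \<longleftrightarrow> mon_ok N c"
  by (auto simp: mon_ok_def mon_mirror_def)

lemma mon_mirror_diff: "mon_mirror N (\<lambda>i. c i - a i) = (\<lambda>i. mon_mirror N c i - mon_mirror N a i)"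
  by (simp add: mon_mirror_def fun_eq_iff)

lemma mon_mirror_le_iff: "(\<forall>i. mon_mirror N a i \<le> mon_mirror N c i) \<longleftrightarrow> (\<forall>i. a i \<le> c i)"
proof
  assume le: "\<forall>i. mon_mirror N a i \<le> mon_mirror N c i"
  show "\<forall>i. a i \<le> c i"
  proof
    fix i
    show "a i \<le> c i"
      using le[rule_format, of "if i \<in> {1..N} then Suc N - i else i"]
      by (auto simp: mon_mirror_def split: if_splits)
  qed
qed (simp add: mon_mirror_def)

lemma op_sign_mon_mirror:
  "op_sign N (mon_mirror N a) (mon_mirror N b) = (op_sign N b a :: 'a::comm_ring_1)"
proof -
  let ?P = "SIGMA i:{1..N}. {1..<i}"
  have pairs: "op_sign N a b = (-1) ^ (\<Sum>(i,j)\<in>?P. a i * b j)" for a b :: "nat \<Rightarrow> nat"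
    by (simp add: op_sign_def sum.Sigma)
  have "(\<Sum>(i,j)\<in>?P. mon_mirror N a i * mon_mirror N b j) = (\<Sum>(i,j)\<in>?P. b i * a j)"
    by (rule sum.reindex_bij_witness[where i="\<lambda>(i,j). (Suc N - j, Suc N - i)"
          and j="\<lambda>(i,j). (Suc N - j, Suc N - i)"]) (auto simp: mon_mirror_def)
  then show ?thesis by (simp add: pairs)
qed

lemma sum_mon_below_complement:
  assumes "mon_ok N c"
  shows "(\<Sum>a\<in>mon_below N c. F a) = (\<Sum>a\<in>mon_below N c. F (\<lambda>i. c i - a i))"
  by (rule sum.reindex_bij_witness[where i="\<lambda>a i. c i - a i" and j="\<lambda>a i. c i - a i"])
    (auto simp: assms mem_mon_below_iff fun_eq_iff)

lemma sum_mon_below_mirror: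
  "(\<Sum>b\<in>mon_below N (mon_mirror N c). F b) = (\<Sum>a\<in>mon_below N c. F (mon_mirror N a))"
  by (rule sum.reindex_bij_witness[where i="mon_mirror N" and j="mon_mirror N"])
    (auto simp: mon_below_def mon_mirror_le_iff dest: mon_mirror_le_iff[of N _ "mon_mirror N c", THEN iffD2])

lemma op_reverse_opmul: "op_reverse N (opmul N f g) = opmul N (op_reverse N g) (op_reverse N f)"
proof
  fix c
  show "op_reverse N (opmul N f g) c = opmul N (op_reverse N g) (op_reverse N f) c"
  proof (cases "mon_ok N c")
    case False
    then show ?thesis by (simp add: op_reverse_def opmul_apply)
  next
    case c: True
    let ?m = "mon_mirror N"
    have "op_reverse N (opmul N f g) c
        = (\<Sum>a\<in>mon_below N c. op_sign N (?m a) (?m (\<lambda>i. c i - a i)) * f (?m a) * g (?m (\<lambda>i. c i - a i)))"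
      by (simp add: op_reverse_def opmul_apply c sum_mon_below_mirror mon_mirror_diff)
    also have "\<dots> = (\<Sum>a\<in>mon_below N c. op_sign N (\<lambda>i. c i - a i) a * g (?m (\<lambda>i. c i - a i)) * f (?m a))"
      by (simp add: op_sign_mon_mirror mult_ac)
    also have "\<dots> = opmul N (op_reverse N g) (op_reverse N f) c"
      by (subst sum_mon_below_complement[OF c])
        (auto simp: op_reverse_def opmul_apply c mem_mon_below_iff intro!: sum.cong arg_cong2[where f=op_sign])
    finally show ?thesis .
  qed
qed

lemma op_reverse_uminus: "op_reverse N (- f) = - op_reverse N f"
  by (simp add: op_reverse_def fun_eq_iff)

lemma op_reverse_sum: "op_reverse N (\<Sum>i\<in>I. F i) = (\<Sum>i\<in>I. op_reverse N (F i))"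
  by (simp add: op_reverse_def fun_eq_iff sum_apply)

lemma op_reverse_opscale: "op_reverse N (opscale k f) = opscale k (op_reverse N f)"
  by (simp add: op_reverse_def opscale_def)

lemma in_opol_op_reverse: "in_opol N f \<Longrightarrow> in_opol N (op_reverse N f)"
  by (simp add: in_opol_def op_reverse_def)

lemma op_reverse_opone [simp]: "op_reverse N opone = opone"
proof -
  have "mon_mirror N c = (\<lambda>_. 0) \<longleftrightarrow> c = (\<lambda>_. 0)" for c
    by (metis mon_mirror_mon_mirror mon_mirror_def)
  then show ?thesis by (simp add: op_reverse_def opone_def)
qed

lemma op_reverse_opvar:
  assumes "i \<in> {1..N}"
  shows "op_reverse N (opvar i) = opvar (Suc N - i)"
proof -
  have "mon_mirror N (\<lambda>j. if j = Suc N - i then 1 else 0) = (\<lambda>j. if j = i then 1 else 0)"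
    using assms by (auto simp: mon_mirror_def fun_eq_iff)
  then have "mon_mirror N c = (\<lambda>j. if j = i then 1 else 0) \<longleftrightarrow> c = (\<lambda>j. if j = Suc N - i then 1 else 0)" for c
    by (metis mon_mirror_mon_mirror)
  then show ?thesis by (simp add: op_reverse_def opvar_def)
qed

lemma op_reverse_oppow:
  assumes "in_opol N f"
  shows "op_reverse N (oppow N f k) = oppow N (op_reverse N f) k"
proof (induct k)
  case (Suc k)
  have "op_reverse N (oppow N f (Suc k)) = opmul N (oppow N (op_reverse N f) k) (op_reverse N f)"
    by (simp add: oppow_Suc op_reverse_opmul Suc)
  also have "\<dots> = oppow N (op_reverse N f) (Suc k)"
    by (rule oppow_Suc'[OF in_opol_op_reverse[OF assms], symmetric])
  finally show ?case .
qed simp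

lemma op_reverse_opprod_opvar:
  "set xs \<subseteq> {1..N} \<Longrightarrow>
   op_reverse N (opprod N (map opvar xs)) = opprod N (map opvar (rev (map (\<lambda>i. Suc N - i) xs)))"
proof (induct xs)
  case Nil
  then show ?case by (simp add: opprod_def)
next
  case (Cons x xs)
  have "Suc N - x \<in> {1..N}" using Cons.prems by auto
  then show ?case
    using Cons by (simp add: opprod_Cons opprod_append opmul_opone_right op_reverse_opmul op_reverse_opvar)
qed

lemma inj_on_reflect: "inj_on (\<lambda>i. Suc N - i) {1..N}"
  by (rule inj_onI) auto

lemma reflect_image_subset: "S \<subseteq> {1..N} \<Longrightarrow> (\<lambda>i. Suc N - i) ` S \<subseteq> {1..N}"
  by (auto simp: image_subset_iff subset_iff)

lemma reflect_image_reflect_image: "S \<subseteq> {1..N} \<Longrightarrow> (\<lambda>i. Suc N - i) ` (\<lambda>i. Suc N - i) ` S = S"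
proof -
  assume S: "S \<subseteq> {1..N}"
  have "Suc N - (Suc N - i) = i" if "i \<in> S" for i using S that by auto
  then show ?thesis by (simp add: image_image)
qed

lemma reflect_image_mem_subsets:
  assumes "S \<in> {S. S \<subseteq> {1..N} \<and> card S = r}"
  shows "(\<lambda>i. Suc N - i) ` S \<in> {S. S \<subseteq> {1..N} \<and> card S = r}"
proof -
  have S: "S \<subseteq> {1..N}" using assms by simp
  have "card ((\<lambda>i. Suc N - i) ` S) = card S"
    using inj_on_subset[OF inj_on_reflect S] by (rule card_image)
  then show ?thesis using assms reflect_image_subset[OF S] by simp
qed

lemma sorted_list_of_set_reflect:
  assumes "S \<subseteq> {1..N}"
  shows "sorted_list_of_set ((\<lambda>i. Suc N - i) ` S) = rev (map (\<lambda>i. Suc N - i) (sorted_list_of_set S))"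
proof -
  have fin: "finite S" using assms finite_subset by blast
  have inj: "inj_on (\<lambda>i. Suc N - i) S"
    using inj_on_reflect assms by (rule inj_on_subset)
  have "sorted_wrt (\<lambda>x y. Suc N - y < Suc N - x) (sorted_list_of_set S)"
  proof (rule sorted_wrt_mono_rel[OF _ strict_sorted_list_of_set])
    fix x y assume "y \<in> set (sorted_list_of_set S)" "x < y"
    then show "Suc N - y < Suc N - x" using assms fin by auto
  qed
  then show ?thesis
    using fin inj by (intro sorted_list_of_set_unique[THEN iffD1])
      (simp_all add: sorted_wrt_rev sorted_wrt_map card_image)
qed

lemma op_reverse_op_e: "op_reverse N (op_e N r) = op_e N r"
proof -
  let ?f = "\<lambda>i. Suc N - i"
  have "op_reverse N (op_e N r) =
      (\<Sum>S\<in>{S. S \<subseteq> {1..N} \<and> card S = r}. opprod N (map opvar (sorted_list_of_set (?f ` S))))"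
    unfolding op_e_def op_reverse_sum
  proof (intro sum.cong refl)
    fix S assume "S \<in> {S. S \<subseteq> {1..N} \<and> card S = r}"
    then have S: "S \<subseteq> {1..N}" and "finite S" using finite_subset by auto
    then show "op_reverse N (opprod N (map opvar (sorted_list_of_set S))) =
        opprod N (map opvar (sorted_list_of_set (?f ` S)))"
      by (simp add: op_reverse_opprod_opvar sorted_list_of_set_reflect)
  qed
  also have "\<dots> = op_e N r"
    unfolding op_e_def
    by (rule sum.reindex_bij_witness[where i="image ?f" and j="image ?f"])
      (metis (no_types, lifting) mem_Collect_eq reflect_image_reflect_image reflect_image_mem_subsets)+
  finally show ?thesis .
qed

lemma reflect_list_mem_sorted:
  assumes "xs \<in> {xs. length xs = r \<and> sorted xs \<and> set xs \<subseteq> {1..N}}"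
  shows "rev (map (\<lambda>i. Suc N - i) xs) \<in> {xs. length xs = r \<and> sorted xs \<and> set xs \<subseteq> {1..N}}"
proof -
  have "sorted_wrt (\<lambda>x y. Suc N - y \<le> Suc N - x) xs"
    using assms by (auto intro: sorted_wrt_mono_rel[of _ "(\<le>)"])
  then show ?thesis
    using assms reflect_image_subset[of "set xs" N] by (simp add: sorted_wrt_rev sorted_wrt_map)
qed

lemma reflect_list_reflect_list:
  "set xs \<subseteq> {1..N} \<Longrightarrow> rev (map (\<lambda>i. Suc N - i) (rev (map (\<lambda>i. Suc N - i) xs))) = xs"
  by (induct xs) auto

lemma op_reverse_op_h: "op_reverse N (op_h N r) = op_h N r"
proof -
  let ?f = "\<lambda>i. Suc N - i"
  let ?L = "{xs. length xs = r \<and> sorted xs \<and> set xs \<subseteq> {1..N}}"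
  have "op_reverse N (op_h N r) = (\<Sum>xs\<in>?L. opprod N (map opvar (rev (rev (map ?f xs)))))"
    unfolding op_h_def op_reverse_sum
    by (intro sum.cong refl) (simp add: op_reverse_opprod_opvar rev_map)
  also have "\<dots> = op_h N r"
    unfolding op_h_def
    by (rule sum.reindex_bij_witness[where i="\<lambda>xs. rev (map ?f xs)" and j="\<lambda>xs. rev (map ?f xs)"])
      (metis (no_types, lifting) mem_Collect_eq reflect_list_reflect_list reflect_list_mem_sorted)+
  finally show ?thesis .
qed

section \<open>Symmetric functions of a subset of the variables\<close>

definition op_e_on :: "nat \<Rightarrow> nat set \<Rightarrow> nat \<Rightarrow> 'a::comm_ring_1 opol" where
  "op_e_on N S r = (\<Sum>T\<in>{T. T \<subseteq> S \<and> card T = r}. opprod N (map opvar (sorted_list_of_set T)))"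

definition op_h_on :: "nat \<Rightarrow> nat set \<Rightarrow> nat \<Rightarrow> 'a::comm_ring_1 opol" where
  "op_h_on N S r = (\<Sum>xs\<in>{xs. length xs = r \<and> sorted xs \<and> set xs \<subseteq> S}. opprod N (map opvar (rev xs)))"

lemma in_opol_op_e_on [simp]: "in_opol N (op_e_on N S r)"
  by (simp add: op_e_on_def in_opol_sum)

lemma in_opol_op_h_on [simp]: "in_opol N (op_h_on N S r)"
  by (simp add: op_h_on_def in_opol_sum)

lemma op_e_on_0: "finite S \<Longrightarrow> op_e_on N S 0 = opone"
proof -
  assume "finite S"
  then have "{T. T \<subseteq> S \<and> card T = 0} = {{}}"
    by (auto simp: card_eq_0_iff dest: rev_finite_subset)
  then show ?thesis by (simp add: op_e_on_def)
qed

lemma op_e_on_eq_0: "finite S \<Longrightarrow> card S < r \<Longrightarrow> op_e_on N S r = 0"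
proof -
  assume "finite S" "card S < r"
  then have none: "{T. T \<subseteq> S \<and> card T = r} = {}"
    using card_mono leD by blast
  show ?thesis unfolding op_e_on_def none by simp
qed

lemma op_h_on_0: "op_h_on N S 0 = opone"
proof -
  have "{xs. length xs = 0 \<and> sorted xs \<and> set xs \<subseteq> S} = {[]}" by auto
  then show ?thesis by (simp add: op_h_on_def)
qed

lemma op_h_on_empty: "op_h_on N {} (Suc r) = 0"
proof -
  have none: "{xs. length xs = Suc r \<and> sorted xs \<and> set xs \<subseteq> {}} = {}" by auto
  show ?thesis unfolding op_h_on_def none by simp
qed

lemma op_e_on_Suc_split:
  assumes S: "finite S" and t: "t \<in> S"
    and insert_t: "\<And>T. T \<subseteq> S - {t} \<Longrightarrow> opprod N (map opvar (sorted_list_of_set (insert t T))) = F T"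
  shows "op_e_on N S (Suc r) = op_e_on N (S - {t}) (Suc r) + (\<Sum>T\<in>{T. T \<subseteq> S - {t} \<and> card T = r}. F T)"
proof -
  let ?A = "{T. T \<subseteq> S - {t} \<and> card T = Suc r}"
  let ?B = "{T. T \<subseteq> S - {t} \<and> card T = r}"
  have fin: "finite {T. T \<subseteq> X \<and> card T = k}" if "X \<subseteq> S" for X k
    using that S by (auto intro: finite_subset[of _ "Pow S"])
  let ?G = "\<lambda>T. opprod N (map opvar (sorted_list_of_set T))"
  have split: "{T. T \<subseteq> S \<and> card T = Suc r} = ?A \<union> insert t ` ?B"
  proof (intro set_eqI iffI)
    fix T assume T: "T \<in> {T. T \<subseteq> S \<and> card T = Suc r}"
    then have "finite T" using S finite_subset by auto
    then show "T \<in> ?A \<union> insert t ` ?B"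
      using T by (cases "t \<in> T") (auto intro!: image_eqI[of _ _ "T - {t}"])
  next
    fix T assume "T \<in> ?A \<union> insert t ` ?B"
    then show "T \<in> {T. T \<subseteq> S \<and> card T = Suc r}"
    proof
      assume "T \<in> insert t ` ?B"
      then obtain U where U: "U \<subseteq> S - {t}" "card U = r" "T = insert t U" by auto
      moreover have "finite U" "t \<notin> U" using U S finite_subset by blast+
      ultimately show ?thesis using t by auto
    qed auto
  qed
  have inj: "inj_on (insert t) ?B"
    by (rule inj_onI) (metis Diff_insert_absorb Diff_iff mem_Collect_eq singletonI subset_iff)
  have "op_e_on N S (Suc r) = sum ?G ?A + sum ?G (insert t ` ?B)"
    unfolding op_e_on_def split by (rule sum.union_disjoint) (auto simp: fin)
  also have "sum ?G (insert t ` ?B) = sum F ?B"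
    by (simp add: sum.reindex[OF inj] insert_t)
  finally show ?thesis by (simp only: op_e_on_def)
qed

lemma sorted_list_of_set_insert_Max:
  "finite T \<Longrightarrow> \<forall>y\<in>T. y < t \<Longrightarrow> sorted_list_of_set (insert t T) = sorted_list_of_set T @ [t::nat]"
  by (intro sorted_list_of_set_unique[THEN iffD1]) (auto simp: sorted_wrt_append card_insert_if)

lemma sorted_list_of_set_insert_Min:
  "finite T \<Longrightarrow> \<forall>y\<in>T. t < y \<Longrightarrow> sorted_list_of_set (insert t T) = t # sorted_list_of_set (T::nat set)"
  by (intro sorted_list_of_set_unique[THEN iffD1]) (auto simp: card_insert_if)

lemma op_e_on_remove_Max:
  assumes S: "S \<subseteq> {1..N}" and t: "t \<in> S" and t_max: "\<forall>y\<in>S. y \<le> t"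
  shows "op_e_on N S (Suc r) = op_e_on N (S - {t}) (Suc r) + opmul N (op_e_on N (S - {t}) r) (opvar t)"
proof -
  have fin: "finite S" using S finite_subset by blast
  have "op_e_on N S (Suc r) = op_e_on N (S - {t}) (Suc r) +
      (\<Sum>T\<in>{T. T \<subseteq> S - {t} \<and> card T = r}. opmul N (opprod N (map opvar (sorted_list_of_set T))) (opvar t))"
  proof (rule op_e_on_Suc_split[OF fin t])
    fix T assume T: "T \<subseteq> S - {t}"
    then have "sorted_list_of_set (insert t T) = sorted_list_of_set T @ [t]"
      using fin t_max by (intro sorted_list_of_set_insert_Max)
        (meson finite_Diff rev_finite_subset, fastforce simp: less_le)
    then show "opprod N (map opvar (sorted_list_of_set (insert t T))) =
        opmul N (opprod N (map opvar (sorted_list_of_set T))) (opvar t)"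
      using S t by (auto simp: opprod_append opprod_Cons opmul_opone_right)
  qed
  then show ?thesis by (simp add: op_e_on_def opmul_sum_left)
qed

lemma op_e_on_remove_Min:
  assumes S: "S \<subseteq> {1..N}" and t: "t \<in> S" and t_min: "\<forall>y\<in>S. t \<le> y"
  shows "op_e_on N S (Suc r) = op_e_on N (S - {t}) (Suc r) + opmul N (opvar t) (op_e_on N (S - {t}) r)"
proof -
  have fin: "finite S" using S finite_subset by blast
  have "op_e_on N S (Suc r) = op_e_on N (S - {t}) (Suc r) +
      (\<Sum>T\<in>{T. T \<subseteq> S - {t} \<and> card T = r}. opmul N (opvar t) (opprod N (map opvar (sorted_list_of_set T))))"
  proof (rule op_e_on_Suc_split[OF fin t])
    fix T assume T: "T \<subseteq> S - {t}"
    then have "sorted_list_of_set (insert t T) = t # sorted_list_of_set T"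
      using fin t_min by (intro sorted_list_of_set_insert_Min)
        (meson finite_Diff rev_finite_subset, fastforce simp: less_le)
    then show "opprod N (map opvar (sorted_list_of_set (insert t T))) =
        opmul N (opvar t) (opprod N (map opvar (sorted_list_of_set T)))"
      by (simp add: opprod_Cons)
  qed
  then show ?thesis by (simp add: op_e_on_def opmul_sum_right)
qed

lemma op_h_on_remove_Min:
  assumes S: "S \<subseteq> {1..N}" and t: "t \<in> S" and t_min: "\<forall>y\<in>S. t \<le> y"
  shows "op_h_on N S (Suc r) = op_h_on N (S - {t}) (Suc r) + opmul N (op_h_on N S r) (opvar t)"
proof -
  let ?L = "\<lambda>k X. {xs. length xs = k \<and> sorted xs \<and> set xs \<subseteq> X}"
  let ?G = "\<lambda>xs. opprod N (map opvar (rev xs))"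
  have "finite S" using S finite_subset by blast
  then have fin: "finite (?L k X)" if "X \<subseteq> S" for k X
    by (intro finite_subset[OF _ finite_lists_length_eq[of S k]]) (use that in auto)
  have split: "?L (Suc r) S = ?L (Suc r) (S - {t}) \<union> Cons t ` ?L r S"
  proof (intro set_eqI iffI)
    fix xs assume xs: "xs \<in> ?L (Suc r) S"
    show "xs \<in> ?L (Suc r) (S - {t}) \<union> Cons t ` ?L r S"
    proof (cases "t \<in> set xs")
      case True
      then obtain z ys where xs_eq: "xs = z # ys" by (cases xs) auto
      have "z = t" using True xs xs_eq t_min by (auto intro: order.antisym)
      then show ?thesis using xs xs_eq by auto
    qed (use xs in auto)
  qed (use t t_min in force)+
  have x_t: "opmul N (opvar t) opone = opvar t"
    using S t by (intro opmul_opone_right) auto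
  have "op_h_on N S (Suc r) = sum ?G (?L (Suc r) (S - {t})) + sum ?G (Cons t ` ?L r S)"
    unfolding op_h_on_def split by (rule sum.union_disjoint) (auto simp: fin)
  also have "sum ?G (Cons t ` ?L r S) = (\<Sum>ys\<in>?L r S. opmul N (?G ys) (opvar t))"
    by (simp add: sum.reindex opprod_append opprod_Cons x_t)
  finally show ?thesis by (simp only: op_h_on_def opmul_sum_left)
qed

definition op_e_signed_on :: "nat \<Rightarrow> nat set \<Rightarrow> nat \<Rightarrow> 'a::comm_ring_1 opol" where
  "op_e_signed_on N S r = opscale ((-1) ^ r) (op_e_on N S r)"

lemma in_opol_op_e_signed_on [simp]: "in_opol N (op_e_signed_on N S r)"
  by (simp add: op_e_signed_on_def)

lemma op_e_signed_on_0: "finite S \<Longrightarrow> op_e_signed_on N S 0 = opone"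
  by (simp add: op_e_signed_on_def op_e_on_0 opscale_def)

lemma op_e_signed_on_eq_0: "finite S \<Longrightarrow> card S < r \<Longrightarrow> op_e_signed_on N S r = 0"
  by (simp add: op_e_signed_on_def op_e_on_eq_0 opscale_def fun_eq_iff)

lemma op_e_signed_on_remove_Max:
  assumes "S \<subseteq> {1..N}" and "t \<in> S" and "\<forall>y\<in>S. y \<le> t"
  shows "op_e_signed_on N S (Suc r) =
    op_e_signed_on N (S - {t}) (Suc r) - opmul N (op_e_signed_on N (S - {t}) r) (opvar t)"
  unfolding op_e_signed_on_def op_e_on_remove_Max[OF assms] opmul_opscale_left
  by (simp add: opscale_def fun_eq_iff algebra_simps)

lemma op_e_signed_on_remove_Min:
  assumes "S \<subseteq> {1..N}" and "t \<in> S" and "\<forall>y\<in>S. t \<le> y"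
  shows "op_e_signed_on N S (Suc r) =
    op_e_signed_on N (S - {t}) (Suc r) - opmul N (opvar t) (op_e_signed_on N (S - {t}) r)"
  unfolding op_e_signed_on_def op_e_on_remove_Min[OF assms] opmul_opscale_right
  by (simp add: opscale_def fun_eq_iff algebra_simps)

lemma sum_atMost_Suc_antidiagonal:
  "(\<Sum>r\<le>Suc j. F r (Suc j - r)) = (\<Sum>r\<le>j. F r (Suc (j - r))) + F (Suc j) (0::nat)"
  by (simp add: Suc_diff_le)

section \<open>Reduction of powers of the last variable\<close>

lemma op_h_e_signed_convolution_remove_Min:
  assumes S: "S \<subseteq> {1..N}" and b: "b \<in> S" and b_min: "\<forall>y\<in>S. b \<le> y"
  shows "(\<Sum>r\<le>Suc j. opmul N (op_h_on N S r) (op_e_signed_on N S (Suc j - r))) =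
    (\<Sum>r\<le>Suc j. opmul N (op_h_on N (S - {b}) r) (op_e_signed_on N (S - {b}) (Suc j - r)))"
proof -
  have fin: "finite S" "finite (S - {b})" using S finite_subset by auto
  let ?H = "op_h_on N S :: nat \<Rightarrow> 'a opol" and ?H' = "op_h_on N (S - {b})"
  let ?E = "op_e_signed_on N S :: nat \<Rightarrow> 'a opol" and ?E' = "op_e_signed_on N (S - {b})"
  let ?x = "opvar b :: 'a opol"
  let ?X = "\<Sum>r\<le>j. opmul N (opmul N (?H r) ?x) (?E' (j - r))"
  let ?B = "\<Sum>r\<le>Suc j. opmul N (?H r) (?E' (Suc j - r))"
  have E_0: "?E 0 = opone" "?E' 0 = opone"
    using fin by (simp_all add: op_e_signed_on_0)
  have "(\<Sum>r\<le>Suc j. opmul N (?H r) (?E (Suc j - r)))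
      = (\<Sum>r\<le>j. opmul N (?H r) (?E (Suc (j - r)))) + opmul N (?H (Suc j)) (?E 0)"
    by (rule sum_atMost_Suc_antidiagonal)
  also have "\<dots> = (\<Sum>r\<le>j. opmul N (?H r) (?E' (Suc (j - r)))) + ?H (Suc j) - ?X"
    by (simp add: E_0 opmul_opone_right op_e_signed_on_remove_Min[OF S b b_min]
        opmul_diff_right opmul_assoc sum_subtractf)
  also have "(\<Sum>r\<le>j. opmul N (?H r) (?E' (Suc (j - r)))) + ?H (Suc j) = ?B"
    unfolding sum_atMost_Suc_antidiagonal[where F="\<lambda>r k. opmul N (?H r) (?E' k)"]
    by (simp add: E_0 opmul_opone_right)
  also have "?B = opmul N (?H 0) (?E' (Suc j)) + (\<Sum>r\<le>j. opmul N (?H (Suc r)) (?E' (j - r)))"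
    by (subst sum.atMost_Suc_shift) simp
  also have "\<dots> = opmul N (?H' 0) (?E' (Suc j)) + (\<Sum>r\<le>j. opmul N (?H' (Suc r)) (?E' (j - r))) + ?X"
    by (simp add: op_h_on_0 op_h_on_remove_Min[OF S b b_min] opmul_add_left sum.distrib add.assoc)
  also have "opmul N (?H' 0) (?E' (Suc j)) + (\<Sum>r\<le>j. opmul N (?H' (Suc r)) (?E' (j - r)))
      = (\<Sum>r\<le>Suc j. opmul N (?H' r) (?E' (Suc j - r)))"
    by (subst sum.atMost_Suc_shift) simp
  finally show ?thesis by (simp only: add_diff_cancel_right')
qed

lemma op_h_e_signed_convolution:
  assumes "S \<subseteq> {1..N}"
  shows "(\<Sum>r\<le>Suc j. opmul N (op_h_on N S r) (op_e_signed_on N S (Suc j - r))) = 0"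
  using assms
proof (induct "card S" arbitrary: S)
  case 0
  then have "S = {}" using finite_subset by fastforce
  have "\<forall>r\<in>{..Suc j}. opmul N (op_h_on N {} r) (op_e_signed_on N {} (Suc j - r)) = 0"
  proof
    fix r assume "r \<in> {..Suc j}"
    then show "opmul N (op_h_on N {} r) (op_e_signed_on N {} (Suc j - r)) = 0"
      by (cases r) (simp_all add: op_h_on_empty op_e_signed_on_eq_0)
  qed
  then show ?case unfolding \<open>S = {}\<close> by (rule sum.neutral)
next
  case (Suc n)
  have fin: "finite S" using Suc.prems finite_subset by blast
  then have "S \<noteq> {}" using Suc.hyps(2) by auto
  then have b: "Min S \<in> S" and b_min: "\<forall>y\<in>S. Min S \<le> y" using fin by auto
  have "n = card (S - {Min S})" using Suc.hyps(2) b fin by simp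
  moreover have "S - {Min S} \<subseteq> {1..N}" using Suc.prems by blast
  ultimately have "(\<Sum>r\<le>Suc j. opmul N (op_h_on N (S - {Min S}) r)
      (op_e_signed_on N (S - {Min S}) (Suc j - r))) = (0 :: 'a opol)"
    by (rule Suc.hyps(1))
  then show ?case by (simp only: op_h_e_signed_convolution_remove_Min[OF Suc.prems b b_min])
qed

lemma op_e_signed_on_oppow_Max_convolution:
  assumes S: "S \<subseteq> {1..N}" and t: "t \<in> S" and t_max: "\<forall>y\<in>S. y \<le> t"
  shows "(\<Sum>q\<le>j. opmul N (op_e_signed_on N S (j - q)) (oppow N (opvar t) q)) = op_e_signed_on N (S - {t}) j"
proof (induct j)
  case 0
  have "finite S" using S finite_subset by blast
  then show ?case by (simp add: op_e_signed_on_0 opmul_opone_left)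
next
  case (Suc j)
  let ?E = "op_e_signed_on N S :: nat \<Rightarrow> 'a opol" and ?E' = "op_e_signed_on N (S - {t})"
    and ?x = "opvar t :: 'a opol"
  have x: "in_opol N ?x" using S t by auto
  have "(\<Sum>q\<le>Suc j. opmul N (?E (Suc j - q)) (oppow N ?x q))
      = opmul N (?E (Suc j)) opone + (\<Sum>q\<le>j. opmul N (?E (j - q)) (oppow N ?x (Suc q)))"
    by (subst sum.atMost_Suc_shift) simp
  also have "(\<Sum>q\<le>j. opmul N (?E (j - q)) (oppow N ?x (Suc q)))
      = opmul N (\<Sum>q\<le>j. opmul N (?E (j - q)) (oppow N ?x q)) ?x"
    by (simp add: oppow_Suc'[OF x] opmul_assoc opmul_sum_left)
  also have "\<dots> = opmul N (?E' j) ?x"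
    unfolding Suc.hyps ..
  also have "opmul N (?E (Suc j)) opone = ?E' (Suc j) - opmul N (?E' j) ?x"
    by (simp add: opmul_opone_right op_e_signed_on_remove_Max[OF S t t_max])
  finally show ?case by (simp only: diff_add_cancel)
qed

lemma oppow_opvar_Max_card:
  assumes S: "S \<subseteq> {1..N}" and t: "t \<in> S" and t_max: "\<forall>y\<in>S. y \<le> t" and card: "card S = Suc n"
  shows "oppow N (opvar t) (Suc n) = - (\<Sum>q\<le>n. opmul N (op_e_signed_on N S (Suc n - q)) (oppow N (opvar t) q))"
proof -
  have fin: "finite S" "finite (S - {t})" using S finite_subset by auto
  have "(\<Sum>q\<le>Suc n. opmul N (op_e_signed_on N S (Suc n - q)) (oppow N (opvar t) q))
      = op_e_signed_on N (S - {t}) (Suc n)"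
    by (rule op_e_signed_on_oppow_Max_convolution[OF S t t_max])
  also have "\<dots> = 0"
    using fin t card by (intro op_e_signed_on_eq_0) auto
  finally show ?thesis
    using fin by (simp add: op_e_signed_on_0 opmul_opone_left eq_neg_iff_add_eq_0 add.commute)
qed

lemma oppow_opvar_Max_reduction:
  assumes S: "S \<subseteq> {1..N}" and t: "t \<in> S" and t_max: "\<forall>y\<in>S. y \<le> t" and card: "card S = Suc n"
  shows "oppow N (opvar t) (m + Suc n) = - (\<Sum>q\<le>n. opmul N
      (\<Sum>r\<le>m. opmul N (op_h_on N S r) (op_e_signed_on N S (m + Suc n - q - r)))
      (oppow N (opvar t) q) :: 'a::comm_ring_1 opol)"
proof (induct m)
  case 0
  show ?case by (simp add: op_h_on_0 opmul_opone_left oppow_opvar_Max_card[OF assms])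
next
  case (Suc m)
  let ?H = "op_h_on N S :: nat \<Rightarrow> 'a opol" and ?E = "op_e_signed_on N S :: nat \<Rightarrow> 'a opol"
  let ?x = "opvar t :: 'a opol"
  let ?p = "oppow N ?x"
  define K where "K k q = (\<Sum>r\<le>k. opmul N (?H r) (?E (k + Suc n - q - r)))" for k q
  define D where "D q = (\<Sum>r\<le>m. opmul N (?H r) (?E (Suc m + Suc n - q - r)))" for q
  have fin: "finite S" using S finite_subset by blast
  have x: "in_opol N ?x" using S t by auto
  have K_m_n: "K m n = - ?H (Suc m)"
  proof -
    have "K m n + ?H (Suc m) = (\<Sum>r\<le>Suc m. opmul N (?H r) (?E (Suc m - r)))"
      by (simp add: K_def fin op_e_signed_on_0 opmul_opone_right)
    also have "\<dots> = 0" using S by (rule op_h_e_signed_convolution)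
    finally show ?thesis by (simp add: eq_neg_iff_add_eq_0)
  qed
  have D_0: "D 0 = 0"
    unfolding D_def by (rule sum.neutral) (simp add: fin card op_e_signed_on_eq_0)
  have D_Suc: "D (Suc q) = K m q" for q
    by (simp add: D_def K_def)
  have "?p (Suc m + Suc n) = opmul N (?p (m + Suc n)) ?x"
    by (simp add: oppow_Suc'[OF x])
  also have "\<dots> = - (\<Sum>q\<le>n. opmul N (K m q) (?p (Suc q)))"
    unfolding Suc[folded K_def] opmul_uminus_left opmul_sum_left opmul_assoc oppow_Suc'[OF x, symmetric] ..
  also have "(\<Sum>q\<le>n. opmul N (K m q) (?p (Suc q)))
      = (\<Sum>q<n. opmul N (K m q) (?p (Suc q))) + opmul N (K m n) (?p (Suc n))"
    by (simp add: lessThan_Suc_atMost[symmetric])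
  also have "(\<Sum>q<n. opmul N (K m q) (?p (Suc q))) = (\<Sum>q\<le>n. opmul N (D q) (?p q))"
    by (simp only: lessThan_Suc_atMost[symmetric] sum.lessThan_Suc_shift D_0 D_Suc opmul_zero_left add_0)
  also have "opmul N (K m n) (?p (Suc n)) = opmul N (?H (Suc m)) (\<Sum>q\<le>n. opmul N (?E (Suc n - q)) (?p q))"
    by (simp add: K_m_n oppow_opvar_Max_card[OF assms] opmul_uminus_left opmul_uminus_right)
  also have "(\<Sum>q\<le>n. opmul N (D q) (?p q)) + \<dots> = (\<Sum>q\<le>n. opmul N (K (Suc m) q) (?p q))"
    by (simp add: K_def D_def opmul_add_left opmul_sum_right opmul_assoc sum.distrib)
  finally show ?case by (simp only: K_def)
qed

theorem mainTheorem10: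
  fixes n m :: nat
  assumes char: "(2::'a::field) \<noteq> 0"
  shows "oppow (n+1) (opvar (n+1) :: 'a opol) (m+n+1) =
           - (\<Sum>q=0..n. opmul (n+1)
                (\<Sum>r=0..m. opscale ((-1) ^ (m+n+1-q-r))
                   (opmul (n+1) (op_h (n+1) r) (op_e (n+1) (m+n+1-q-r))))
                (oppow (n+1) (opvar (n+1)) q))
       \<and> oppow (n+1) (opvar 1 :: 'a opol) (m+n+1) =
           - (\<Sum>p=0..n. opmul (n+1) (oppow (n+1) (opvar 1) p)
                (\<Sum>s=0..m. opscale ((-1) ^ (m+n+1-p-s))
                   (opmul (n+1) (op_e (n+1) (m+n+1-p-s)) (op_h (n+1) s))))"
    (is "?last \<and> ?first")
proof
  have e: "op_e N = op_e_on N {1..N}" and h: "op_h N = op_h_on N {1..N}" for N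
    by (simp_all add: fun_eq_iff op_e_def op_e_on_def op_h_def op_h_on_def)
  show last: ?last
    using oppow_opvar_Max_reduction[of "{1..n+1}" "n+1" "n+1" n m]
    by (simp add: atLeast0AtMost e h op_e_signed_on_def opmul_opscale_right)
  from arg_cong[where f="op_reverse (n+1)", OF last] show ?first
    by (simp add: op_reverse_oppow op_reverse_opvar op_reverse_uminus op_reverse_sum op_reverse_opmul
        op_reverse_opscale op_reverse_op_e op_reverse_op_h)
qed

end
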